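(* Let $d\in\{2,3\}$, $r_s>0$ and $0<\delta<0.75$. Let robot $i$ have random position $\mathbf{p}_i\sim\mathcal{N}(\hat{\mathbf{p}}_i,\Sigma_i)$ in $\mathbb{R}^d$, and let $o$ be an uncertain obstacle $\mathcal{O}_o=\{\mathbf{x}+\mathbf{d}_o:\mathbf{x}\in\hat{\mathcal{O}}_o\}$ with $\hat{\mathcal{O}}_o\subset\mathbb{R}^d$ a bounded convex polytope and $\mathbf{d}_o\sim\mathcal{N}(0,\Sigma_o)$ ($\Sigma_o$ positive definite), with $\mathbf{d}_o$ independent of $\mathbf{p}_i$. Let $(\mathbf{a}_{io},b_{io})$ be the robot-obstacle uncertainty-aware separating hyperplane constructed as in the context, and suppose $\hat{\mathbf{p}}_i\in\mathcal{V}_i^{u,b}$ (so in particular $\mathbf{a}_{io}^T\hat{\mathbf{p}}_i\le b_{io}-r_s\|\mathbf{a}_{io}\|-\sqrt{2\mathbf{a}_{io}^T\Sigma_i\mathbf{a}_{io}}\,\mathrm{erf}^{-1}(2\sqrt{1-\delta}-1)$). Then $$\Pr\big(\mathrm{dis}(\mathbf{p}_i,\mathcal{O}_o)\ge r_s\big)\ge 1-\delta,$$ where $\mathrm{dis}(\mathbf{p},\mathcal{O})=\min_{\mathbf{q}\in\mathcal{O}}\|\mathbf{p}-\mathbf{q}\|$.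
   Context: Construction of $(\mathbf{a}_{io},b_{io})$: let $W=(\sqrt{\Sigma_o})^{-1}$, $\hat{\mathbf{p}}_i^W=W\hat{\mathbf{p}}_i$, $\hat{\mathcal{O}}_o^W=W\hat{\mathcal{O}}_o$ (so $W\mathbf{d}_o\sim\mathcal{N}(0,I)$). Let $\epsilon=1-\sqrt{1-\delta}$ and $F^{-1}$ the inverse CDF of the chi-squared distribution with $d$ degrees of freedom. Let $\mathcal{S}_o^W$ be a convex polytope, obtained by dilating $\hat{\mathcal{O}}_o^W$, that contains the Minkowski sum $\hat{\mathcal{O}}_o^W+\{\mathbf{d}:\mathbf{d}^T\mathbf{d}\le F^{-1}(1-\epsilon)\}$, with vertices $\psi_1^W,\dots,\psi_{p_o}^W$ (assume $\hat{\mathbf{p}}_i^W\notin\mathcal{S}_o^W$). Solve the quadratic program $\min \|\mathbf{a}^W\|^2$ s.t. $(\mathbf{a}^W)^T\hat{\mathbf{p}}_i^W-b^W\le 1$ (stated as $-1$ side separation in SVM form) and $(\mathbf{a}^W)^T\psi_k^W-b^W\ge 1$ for all $k$, then shift the resulting hyperplane along its normal toward $\mathcal{S}_o^W$ until it touches $\mathcal{S}_o^W$, giving $(\mathbf{a}_{io}^W,b_{io}^W)$ with $\mathcal{S}_o^W\subseteq\{\mathbf{y}:(\mathbf{a}_{io}^W)^T\mathbf{y}\ge b_{io}^W\}$. Finally set $\mathbf{a}_{io}=W^T\mathbf{a}_{io}^W$, $b_{io}=b_{io}^W$. The B-UAVC of robot $i$ is $\mathcal{V}_i^{u,b}=\{\mathbf{p}:\mathbf{a}_{il}^T\mathbf{p}\le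 b_{il}-r_s\|\mathbf{a}_{il}\|-\sqrt{2\mathbf{a}_{il}^T\Sigma_i\mathbf{a}_{il}}\,\mathrm{erf}^{-1}(2\sqrt{1-\delta}-1)\ \forall l\neq i\}$, the intersection over all other robots and obstacles $l$ of such buffered half-spaces, with $\mathrm{erf}(x)=\frac{2}{\sqrt\pi}\int_0^xe^{-t^2}dt$. *)

theory Defs
  imports "HOL-Analysis.Analysis" "HOL-Probability.Probability"
begin

definition sym_mat :: "real^'n^'n \<Rightarrow> bool" where
  "sym_mat S \<longleftrightarrow> transpose S = S"

definition psd_mat :: "real^'n^'n \<Rightarrow> bool" where
  "psd_mat S \<longleftrightarrow> sym_mat S \<and> (\<forall>x. 0 \<le> x \<bullet> (S *v x))"

definition pd_mat :: "real^'n^'n \<Rightarrow> bool" where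
  "pd_mat S \<longleftrightarrow> sym_mat S \<and> (\<forall>x. x \<noteq> 0 \<longrightarrow> 0 < x \<bullet> (S *v x))"

definition normal_measure :: "real \<Rightarrow> real \<Rightarrow> real measure" where
  "normal_measure m v =
     (if v = 0 then return borel m else density lborel (normal_density m (sqrt v)))"

definition gaussian_vec ::
  "'a measure \<Rightarrow> ('a \<Rightarrow> real^'n) \<Rightarrow> real^'n \<Rightarrow> real^'n^'n \<Rightarrow> bool" where
  "gaussian_vec M X mu Sig \<longleftrightarrow>
     psd_mat Sig \<and> X \<in> borel_measurable M \<and>
     (\<forall>c. distr M borel (\<lambda>w. c \<bullet> X w) = normal_measure (c \<bullet> mu) (c \<bullet> (Sig *v c)))"

definition erf :: "real \<Rightarrow> real" where
  "erf x = 2 / sqrt pi * interval_lebesgue_integral lborel (ereal 0) (ereal x) (\<lambda>t. exp (- (t\<^sup>2)))"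

definition erf_inv :: "real \<Rightarrow> real" where
  "erf_inv y = (THE x. erf x = y)"

definition chi2_density :: "nat \<Rightarrow> real \<Rightarrow> real" where
  "chi2_density k x =
     (if x \<le> 0 then 0
      else x powr (real k / 2 - 1) * exp (- x / 2) / (2 powr (real k / 2) * Gamma (real k / 2)))"

definition chi2_cdf :: "nat \<Rightarrow> real \<Rightarrow> real" where
  "chi2_cdf k x = (if x \<le> 0 then 0
     else interval_lebesgue_integral lborel (ereal 0) (ereal x) (chi2_density k))"

definition chi2_inv :: "nat \<Rightarrow> real \<Rightarrow> real" where
  "chi2_inv k q = Inf {x. q \<le> chi2_cdf k x}"

definition buavc ::
  "real \<Rightarrow> real \<Rightarrow> real^'n^'n \<Rightarrow> 'l set \<Rightarrow> ('l \<Rightarrow> real^'n) \<Rightarrow> ('l \<Rightarrow> real) \<Rightarrow> (real^'n) set" where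
  "buavc rs \<delta> Sig L a b =
     {p. \<forall>l\<in>L. a l \<bullet> p \<le> b l - rs * norm (a l)
          - sqrt (2 * (a l \<bullet> (Sig *v a l))) * erf_inv (2 * sqrt (1 - \<delta>) - 1)}"

end

theory Submission
  imports Defs "HOL-Real_Asymp.Real_Asymp"
begin

(* After whitening, W d_o ~ N(0, I), and the dilated polytope SW contains the ball of radius
   sqrt c around every point of W Oh, where c = chi2_inv d (sqrt (1 - delta)).  Hence the shifted
   hyperplane keeps the nominal obstacle beyond a margin, a_io^T x >= b_io + sqrt c |aW| for x
   in Oh, and the robot is at distance >= rs from the shifted obstacle as soon as both
   a_io^T p <= b_io - rs |a_io| and -a_io^T d_o <= sqrt c |aW|.  These events are independent.  The
   first has probability >= sqrt (1 - delta) by the buffer of the cell.  Since -a_io^T d_o is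
   N(0, |aW|^2), the second has probability Phi (sqrt c) >= sqrt (1 - delta): for d = 2, 3 the
   chi-squared cdf lies below x |-> Phi (sqrt x). *)

section \<open>The error function\<close>

lemma DERIV_erf: "(erf has_real_derivative 2 / sqrt pi * exp (- x\<^sup>2)) (at x)"
proof -
  define a b where "a = min 0 x - 1" and "b = max 0 x + 1"
  have cont: "continuous_on {a..b} (\<lambda>t::real. exp (- t\<^sup>2))"
    by (intro continuous_intros)
  have "((\<lambda>u. LBINT t=ereal 0..ereal u. exp (- t\<^sup>2)) has_vector_derivative exp (- x\<^sup>2))
      (at x within {a..b})"
    by (rule interval_integral_FTC2[where c = 0, OF _ _ cont]) (auto simp: a_def b_def)
  moreover have "at x within {a..b} = at x"
    by (rule at_within_interior) (auto simp: a_def b_def)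
  ultimately have
    "((\<lambda>u. LBINT t=ereal 0..ereal u. exp (- t\<^sup>2)) has_real_derivative exp (- x\<^sup>2)) (at x)"
    by (simp add: has_real_derivative_iff_has_vector_derivative)
  then show ?thesis
    unfolding erf_def[abs_def] by (rule DERIV_cmult)
qed

lemma DERIV_erf_compose [derivative_intros]:
  "(f has_real_derivative D) (at x) \<Longrightarrow>
   ((\<lambda>x. erf (f x)) has_real_derivative 2 / sqrt pi * exp (- (f x)\<^sup>2) * D) (at x)"
  by (rule DERIV_chain2[OF DERIV_erf])

lemma erf_0 [simp]: "erf 0 = 0"
  by (simp add: erf_def)

lemma isCont_erf [continuous_intros]: "isCont f x \<Longrightarrow> isCont (\<lambda>x. erf (f x)) x"
  by (rule isCont_o2[OF _ DERIV_isCont[OF DERIV_erf]])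

lemma continuous_on_erf [continuous_intros]:
  "continuous_on S f \<Longrightarrow> continuous_on S (\<lambda>x. erf (f x))"
  by (rule continuous_on_compose2[of UNIV erf])
     (auto intro!: continuous_at_imp_continuous_on isCont_erf[where f = "\<lambda>x. x"])

lemma strict_mono_erf: "strict_mono erf"
  by (rule strict_monoI, rule DERIV_pos_imp_increasing) (auto intro: DERIV_erf)

lemma erf_le_erf_iff [simp]: "erf x \<le> erf y \<longleftrightarrow> x \<le> y"
  by (rule strict_mono_less_eq[OF strict_mono_erf])

lemma erf_minus: "erf (- x) = - erf x"
proof -
  have "\<forall>y. ((\<lambda>x. erf (- x) + erf x) has_real_derivative 0) (at y)"
    by (auto intro!: derivative_eq_intros)
  from DERIV_isconst_all[OF this, of x 0] show ?thesis
    by simp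
qed

lemma erf_at_top: "(erf \<longlongrightarrow> 1) at_top"
proof -
  have gauss: "has_bochner_integral lborel (\<lambda>t. indicator {0..} t *\<^sub>R exp (- t\<^sup>2)) (sqrt pi / 2)"
    by (rule gaussian_moment_0)
  then have integrable: "set_integrable lborel {0..} (\<lambda>t::real. exp (- t\<^sup>2))"
    unfolding set_integrable_def using integrable.intros by blast
  have "((\<lambda>x. LBINT t:{0..x}. exp (- t\<^sup>2)) \<longlongrightarrow> (LBINT t:{0..}. exp (- (t::real)\<^sup>2))) at_top"
    using tendsto_set_lebesgue_integral_at_top[OF _ integrable] by simp
  also have "(LBINT t:{0..}. exp (- t\<^sup>2)) = sqrt pi / 2"
    using gauss unfolding set_lebesgue_integral_def by (simp add: has_bochner_integral_integral_eq)
  finally have "((\<lambda>x. 2 / sqrt pi * (LBINT t:{0..x}. exp (- t\<^sup>2))) \<longlongrightarrow> 2 / sqrt pi * (sqrt pi / 2))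
      at_top"
    by (rule tendsto_mult_left)
  then have "((\<lambda>x. 2 / sqrt pi * (LBINT t:{0..x}. exp (- t\<^sup>2))) \<longlongrightarrow> 1) at_top"
    by simp
  moreover have "eventually (\<lambda>x. 2 / sqrt pi * (LBINT t:{0..x}. exp (- t\<^sup>2)) = erf x) at_top"
    using eventually_ge_at_top[of 0]
    by eventually_elim (simp add: erf_def interval_integral_Icc zero_ereal_def)
  ultimately show ?thesis
    by (rule Lim_transform_eventually)
qed

lemma erf_at_bot: "(erf \<longlongrightarrow> -1) at_bot"
proof -
  have "((\<lambda>x. - erf (- x)) \<longlongrightarrow> -1) at_bot"
    by (intro tendsto_minus filterlim_compose[OF erf_at_top] filterlim_uminus_at_top_at_bot)
  then show ?thesis
    by (simp add: erf_minus)
qed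

lemma erf_less_1: "erf x < 1"
proof -
  have "erf (x + 1) \<le> 1"
    by (rule tendsto_lowerbound[OF erf_at_top])
       (auto intro!: eventually_mono[OF eventually_ge_at_top[of "x + 1"]])
  with strict_monoD[OF strict_mono_erf, of x "x + 1"] show ?thesis
    by simp
qed

lemma erf_erf_inv:
  assumes "-1 < y" "y < 1"
  shows "erf (erf_inv y) = y"
proof -
  obtain a where a: "erf a < y"
    using order_tendstoD(2)[OF erf_at_bot assms(1)] by (auto simp: eventually_at_bot_linorder)
  obtain b where b: "erf b > y"
    using order_tendstoD(1)[OF erf_at_top assms(2)] by (auto simp: eventually_at_top_linorder)
  have "a < b"
    using a b strict_mono_less[OF strict_mono_erf, of a b] by simp
  then obtain x where x: "erf x = y"
    using IVT[of erf a y b] a b isCont_erf[where f = "\<lambda>x. x"] by auto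
  have "(THE x. erf x = y) = x"
    using x strict_mono_eq[OF strict_mono_erf] by (intro the_equality) auto
  then show ?thesis
    unfolding erf_inv_def using x by simp
qed

lemma erf_plus_two_exp_decreasing:
  assumes "1 / 2 \<le> v" "v \<le> w"
  shows "erf w + 2 * exp (- w\<^sup>2) \<le> erf v + 2 * exp (- v\<^sup>2)"
proof (rule DERIV_nonpos_imp_decreasing_open[OF assms(2)])
  fix x assume x: "v < x" "x < w"
  have "1 \<le> sqrt pi"
    using pi_gt3 by simp
  then have "2 / sqrt pi \<le> 2"
    by (simp add: divide_le_eq)
  then have "2 / sqrt pi \<le> 4 * x"
    using x assms(1) by linarith
  then have "2 / sqrt pi * exp (- x\<^sup>2) - 4 * x * exp (- x\<^sup>2) \<le> 0"
    using mult_right_mono[of "2 / sqrt pi" "4 * x" "exp (- x\<^sup>2)"] by simp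
  moreover have "((\<lambda>w. erf w + 2 * exp (- w\<^sup>2)) has_real_derivative
      2 / sqrt pi * exp (- x\<^sup>2) - 4 * x * exp (- x\<^sup>2)) (at x)"
    by (auto intro!: derivative_eq_intros)
  ultimately show "\<exists>y. ((\<lambda>w. erf w + 2 * exp (- w\<^sup>2)) has_real_derivative y) (at x) \<and> y \<le> 0"
    by blast
qed (intro continuous_intros)

lemma erf_ge_one_minus_two_exp:
  assumes "0 \<le> v"
  shows "1 - 2 * exp (- v\<^sup>2) \<le> erf v"
proof (cases "v \<le> 1 / 2")
  case True
  have "1 - v\<^sup>2 \<le> exp (- v\<^sup>2)"
    using exp_ge_add_one_self[of "- v\<^sup>2"] by simp
  moreover have "v\<^sup>2 \<le> (1 / 2)\<^sup>2"
    using True assms by (intro power_mono) auto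
  moreover have "0 \<le> erf v"
    using assms erf_le_erf_iff[of 0 v] by simp
  ultimately show ?thesis
    by (simp add: power2_eq_square)
next
  case False
  then have "1 / 2 \<le> v"
    by simp
  have "((\<lambda>w::real. exp (- w\<^sup>2)) \<longlongrightarrow> 0) at_top"
    by real_asymp
  then have "((\<lambda>w. erf w + 2 * exp (- w\<^sup>2)) \<longlongrightarrow> 1 + 2 * 0) at_top"
    by (intro tendsto_add tendsto_mult tendsto_const erf_at_top)
  moreover have "eventually (\<lambda>w. erf w + 2 * exp (- w\<^sup>2) \<le> erf v + 2 * exp (- v\<^sup>2)) at_top"
    using eventually_ge_at_top[of v]
    by eventually_elim (rule erf_plus_two_exp_decreasing[OF \<open>1 / 2 \<le> v\<close>])
  ultimately have "1 + 2 * 0 \<le> erf v + 2 * exp (- v\<^sup>2)"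
    by (rule tendsto_upperbound) simp
  then show ?thesis
    by simp
qed

section \<open>The standard normal distribution\<close>

definition std_normal_cdf :: "real \<Rightarrow> real" where
  "std_normal_cdf x = (1 + erf (x / sqrt 2)) / 2"

lemma std_normal_cdf_mono: "x \<le> y \<Longrightarrow> std_normal_cdf x \<le> std_normal_cdf y"
  by (simp add: std_normal_cdf_def divide_right_mono)

lemma std_normal_cdf_less_1: "std_normal_cdf x < 1"
  using erf_less_1[of "x / sqrt 2"] by (simp add: std_normal_cdf_def)

lemma std_normal_cdf_erf_inv:
  "-1 < y \<Longrightarrow> y < 1 \<Longrightarrow> std_normal_cdf (sqrt 2 * erf_inv y) = (1 + y) / 2"
  by (simp add: std_normal_cdf_def erf_erf_inv)

lemma DERIV_std_normal_cdf_affine: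
  assumes "0 < \<sigma>"
  shows "((\<lambda>x. std_normal_cdf ((x - \<mu>) / \<sigma>)) has_real_derivative normal_density \<mu> \<sigma> x) (at x)"
proof -
  have "((\<lambda>x. std_normal_cdf ((x - \<mu>) / \<sigma>)) has_real_derivative
      2 / sqrt pi * exp (- ((x - \<mu>) / \<sigma> / sqrt 2)\<^sup>2) * (1 / \<sigma> / sqrt 2) / 2) (at x)"
    unfolding std_normal_cdf_def using assms by (auto intro!: derivative_eq_intros)
  also have "2 / sqrt pi * exp (- ((x - \<mu>) / \<sigma> / sqrt 2)\<^sup>2) * (1 / \<sigma> / sqrt 2) / 2
      = normal_density \<mu> \<sigma> x"
  proof -
    have "- ((x - \<mu>) / \<sigma> / sqrt 2)\<^sup>2 = - (x - \<mu>)\<^sup>2 / (2 * \<sigma>\<^sup>2)"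
      by (simp add: power_divide power_mult_distrib mult.commute)
    moreover have "sqrt (2 * pi * \<sigma>\<^sup>2) = sqrt pi * \<sigma> * sqrt 2"
      using assms by (simp add: real_sqrt_mult)
    ultimately show ?thesis
      using assms by (simp add: normal_density_def field_simps)
  qed
  finally show ?thesis .
qed

lemma std_normal_cdf_affine_at_bot:
  assumes "0 < \<sigma>"
  shows "((\<lambda>x. std_normal_cdf ((x - \<mu>) / \<sigma>)) \<longlongrightarrow> 0) at_bot"
proof -
  have "filterlim (\<lambda>x. (x - \<mu>) / \<sigma> / sqrt 2) at_bot at_bot"
    using assms by real_asymp
  then have "((\<lambda>x. (1 + erf ((x - \<mu>) / \<sigma> / sqrt 2)) / 2) \<longlongrightarrow> (1 + -1) / 2) at_bot"
    by (intro tendsto_intros filterlim_compose[OF erf_at_bot]) auto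
  then show ?thesis
    by (simp add: std_normal_cdf_def)
qed

lemma measure_density_eq_set_integral:
  fixes f :: "'a \<Rightarrow> real"
  assumes "set_integrable M A f" "A \<in> sets M" "f \<in> borel_measurable M" "\<And>x. 0 \<le> f x"
  shows "measure (density M f) A = (LINT x:A|M. f x)"
proof -
  have "emeasure (density M f) A = (\<integral>\<^sup>+x. ennreal (f x) * indicator A x \<partial>M)"
    using assms by (subst emeasure_density) auto
  also have "\<dots> = ennreal (LINT x:A|M. f x)"
    unfolding set_lebesgue_integral_def nn_integral_set_ennreal using assms
    by (subst nn_integral_eq_integral) (simp_all add: mult_ac set_integrable_def)
  moreover have "0 \<le> (LINT x:A|M. f x)"
    unfolding set_lebesgue_integral_def using assms(4)
    by (intro integral_nonneg_AE) (simp add: indicator_def)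
  ultimately show ?thesis
    by (simp add: measure_def)
qed

lemma measure_normal_density_lessThan:
  assumes "0 < \<sigma>"
  shows "measure (density lborel (normal_density \<mu> \<sigma>)) {..<t} = std_normal_cdf ((t - \<mu>) / \<sigma>)"
proof -
  let ?F = "\<lambda>x. std_normal_cdf ((x - \<mu>) / \<sigma>)"
  have deriv: "(?F has_real_derivative normal_density \<mu> \<sigma> x) (at x)" for x
    by (rule DERIV_std_normal_cdf_affine[OF assms])
  have "continuous (at_left t) ?F"
    using deriv by (meson DERIV_isCont continuous_at_imp_continuous_at_within)
  then have upper: "((?F \<circ> real_of_ereal) \<longlongrightarrow> ?F t) (at_left (ereal t))"
    unfolding ereal_tendsto_simps by (simp add: continuous_within)
  have lower: "((?F \<circ> real_of_ereal) \<longlongrightarrow> 0) (at_right (-\<infinity>))"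
    unfolding ereal_tendsto_simps by (rule std_normal_cdf_affine_at_bot[OF assms])
  have "isCont (normal_density \<mu> \<sigma>) x" for x
    unfolding normal_density_def[abs_def] by (intro continuous_intros) (use assms in auto)
  note FTC = interval_integral_FTC_nonneg[OF _ deriv this _ lower upper]
  have "set_integrable lborel (einterval (-\<infinity>) (ereal t)) (normal_density \<mu> \<sigma>)"
      "(LBINT x=-\<infinity>..ereal t. normal_density \<mu> \<sigma> x) = ?F t - 0"
    by (rule FTC; simp)+
  moreover have "einterval (-\<infinity>) (ereal t) = {..<t}"
    by (auto simp: einterval_def)
  ultimately show ?thesis
    by (simp add: measure_density_eq_set_integral interval_lebesgue_integral_def)
qed

lemma (in prob_space) gaussian_vec_prob_inner_le:
  assumes X: "gaussian_vec M X \<mu> \<Sigma>" and t: "c \<bullet> \<mu> + sqrt (c \<bullet> (\<Sigma> *v c)) * z \<le> t"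
  shows "std_normal_cdf z \<le> prob {\<omega> \<in> space M. c \<bullet> X \<omega> \<le> t}"
proof -
  define v where "v = c \<bullet> (\<Sigma> *v c)"
  have [measurable]: "X \<in> borel_measurable M"
    using X by (simp add: gaussian_vec_def)
  have distr: "distr M borel (\<lambda>\<omega>. c \<bullet> X \<omega>) = normal_measure (c \<bullet> \<mu>) v"
    using X by (simp add: gaussian_vec_def v_def)
  have prob_distr: "prob {\<omega> \<in> space M. c \<bullet> X \<omega> \<in> A} = measure (normal_measure (c \<bullet> \<mu>) v) A"
    if "A \<in> sets borel" for A
    using that by (simp add: distr[symmetric] measure_distr vimage_def Int_def conj_commute)
  show ?thesis
  proof (cases "v = 0")
    case True
    then have "prob {\<omega> \<in> space M. c \<bullet> X \<omega> \<le> t} = 1"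
      using prob_distr[of "{..t}"] t v_def by (simp add: normal_measure_def measure_return)
    then show ?thesis
      using std_normal_cdf_less_1[of z] by simp
  next
    case False
    then have v: "0 < v"
      using X by (simp add: gaussian_vec_def psd_mat_def v_def order_less_le)
    have "std_normal_cdf z \<le> std_normal_cdf ((t - c \<bullet> \<mu>) / sqrt v)"
      using t v by (intro std_normal_cdf_mono) (simp add: v_def field_simps)
    also have "\<dots> = prob {\<omega> \<in> space M. c \<bullet> X \<omega> < t}"
      using prob_distr[of "{..<t}"] v
      by (simp add: normal_measure_def measure_normal_density_lessThan)
    also have "\<dots> \<le> prob {\<omega> \<in> space M. c \<bullet> X \<omega> \<le> t}"
      by (intro finite_measure_mono) auto
    finally show ?thesis .
  qed
qed

lemma (in prob_space) gaussian_vec_prob_inner_le_erf_inv: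
  assumes "gaussian_vec M X \<mu> \<Sigma>" "-1 < y" "y < 1"
    and "c \<bullet> \<mu> \<le> t - sqrt (2 * (c \<bullet> (\<Sigma> *v c))) * erf_inv y"
  shows "(1 + y) / 2 \<le> prob {\<omega> \<in> space M. c \<bullet> X \<omega> \<le> t}"
proof -
  have "c \<bullet> \<mu> + sqrt (c \<bullet> (\<Sigma> *v c)) * (sqrt 2 * erf_inv y) \<le> t"
    using assms(4) by (simp add: real_sqrt_mult algebra_simps)
  from gaussian_vec_prob_inner_le[OF assms(1) this] show ?thesis
    by (simp add: std_normal_cdf_erf_inv assms(2,3))
qed

section \<open>Chi-squared laws with two and three degrees of freedom\<close>

lemma Gamma_three_halves: "Gamma (3 / 2 :: real) = sqrt pi / 2"
proof -
  have "(1 / 2 :: real) \<notin> \<int>\<^sub>\<le>\<^sub>0"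
    using fraction_not_in_Ints[of 2 1, where 'a = real]
    by (intro not_in_Ints_imp_not_in_nonpos_Ints) simp
  then have "Gamma (1 / 2 + 1 :: real) = 1 / 2 * Gamma (1 / 2)"
    by (rule Gamma_plus1)
  then show ?thesis
    by (simp add: Gamma_one_half_real)
qed

lemma interval_integral_FTC_nonneg_isCont:
  fixes F f :: "real \<Rightarrow> real"
  assumes "a < b" "isCont F a" "isCont F b"
    and "\<And>x. a < x \<Longrightarrow> x < b \<Longrightarrow> (F has_real_derivative f x) (at x)"
    and "\<And>x. a < x \<Longrightarrow> x < b \<Longrightarrow> isCont f x"
    and "\<And>x. a < x \<Longrightarrow> x < b \<Longrightarrow> 0 \<le> f x"
  shows "(LBINT x=ereal a..ereal b. f x) = F b - F a"
proof (rule interval_integral_FTC_nonneg)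
  show "((F \<circ> real_of_ereal) \<longlongrightarrow> F a) (at_right (ereal a))"
    using assms(2) unfolding ereal_tendsto_simps isCont_def
    by (rule filterlim_mono) (simp_all add: at_le)
  show "((F \<circ> real_of_ereal) \<longlongrightarrow> F b) (at_left (ereal b))"
    using assms(3) unfolding ereal_tendsto_simps isCont_def
    by (rule filterlim_mono) (simp_all add: at_le)
qed (use assms in auto)

lemma chi2_cdf_2: "0 < x \<Longrightarrow> chi2_cdf 2 x = 1 - exp (- x / 2)"
proof -
  assume x: "0 < x"
  have "chi2_cdf 2 x = (LBINT t=ereal 0..ereal x. chi2_density 2 t)"
    using x by (simp add: chi2_cdf_def)
  also have "\<dots> = (LBINT t=ereal 0..ereal x. exp (- t / 2) / 2)"
    by (rule interval_integral_cong) (use x in \<open>auto simp: einterval_def chi2_density_def\<close>)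
  also have "\<dots> = (1 - exp (- x / 2)) - (1 - exp (- 0 / 2))"
    using x
    by (intro interval_integral_FTC_nonneg_isCont continuous_intros)
       (auto intro!: derivative_eq_intros)
  finally show ?thesis
    by simp
qed

lemma chi2_density_3: "0 < t \<Longrightarrow> chi2_density 3 t = sqrt t * exp (- t / 2) / (sqrt 2 * sqrt pi)"
proof -
  assume t: "0 < t"
  have "(2 :: real) powr (3 / 2) = 2 * sqrt 2"
    using powr_add[of "2 :: real" 1 "1 / 2"] by (simp add: powr_half_sqrt)
  with t show ?thesis
    by (simp add: chi2_density_def powr_half_sqrt Gamma_three_halves)
qed

lemma chi2_cdf_3:
  "0 < x \<Longrightarrow> chi2_cdf 3 x = erf (sqrt x / sqrt 2) - sqrt (2 / pi) * sqrt x * exp (- x / 2)"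
proof -
  assume x: "0 < x"
  define F where "F t = erf (sqrt t / sqrt 2) - sqrt (2 / pi) * sqrt t * exp (- t / 2)" for t
  have "(F has_real_derivative sqrt t * exp (- t / 2) / (sqrt 2 * sqrt pi)) (at t)" if "0 < t" for t
    unfolding F_def[abs_def] using that
    by (auto intro!: derivative_eq_intros simp: field_simps real_sqrt_divide)
  then have "(LBINT t=ereal 0..ereal x. sqrt t * exp (- t / 2) / (sqrt 2 * sqrt pi)) = F x - F 0"
    using x unfolding F_def by (intro interval_integral_FTC_nonneg_isCont continuous_intros) auto
  moreover have "chi2_cdf 3 x = (LBINT t=ereal 0..ereal x. chi2_density 3 t)"
    using x by (simp add: chi2_cdf_def)
  moreover have "\<dots> = (LBINT t=ereal 0..ereal x. sqrt t * exp (- t / 2) / (sqrt 2 * sqrt pi))"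
    by (rule interval_integral_cong) (use x in \<open>auto simp: einterval_def chi2_density_3\<close>)
  ultimately show ?thesis
    by (simp add: F_def)
qed

lemma chi2_cdf_le_std_normal_cdf_sqrt:
  assumes "k = 2 \<or> k = 3" "0 < x"
  shows "chi2_cdf k x \<le> std_normal_cdf (sqrt x)"
  using assms(1)
proof
  assume "k = 2"
  have "1 - 2 * exp (- (sqrt x / sqrt 2)\<^sup>2) \<le> erf (sqrt x / sqrt 2)"
    using assms(2) by (intro erf_ge_one_minus_two_exp) simp
  then show ?thesis
    using \<open>k = 2\<close> assms(2) by (simp add: chi2_cdf_2 std_normal_cdf_def power_divide)
next
  assume "k = 3"
  have "chi2_cdf k x \<le> erf (sqrt x / sqrt 2)"
    using \<open>k = 3\<close> assms(2) by (simp add: chi2_cdf_3)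
  then show ?thesis
    using erf_less_1[of "sqrt x / sqrt 2"] by (simp add: std_normal_cdf_def)
qed

lemma chi2_cdf_at_top:
  assumes "k = 2 \<or> k = 3"
  shows "(chi2_cdf k \<longlongrightarrow> 1) at_top"
  using assms
proof
  assume "k = 2"
  have "((\<lambda>x::real. 1 - exp (- x / 2)) \<longlongrightarrow> 1) at_top"
    by real_asymp
  moreover have "eventually (\<lambda>x. 1 - exp (- x / 2) = chi2_cdf k x) at_top"
    using eventually_gt_at_top[of 0] by eventually_elim (simp add: \<open>k = 2\<close> chi2_cdf_2)
  ultimately show ?thesis
    by (rule Lim_transform_eventually)
next
  assume "k = 3"
  have "filterlim (\<lambda>x. sqrt x / sqrt 2) at_top at_top"
    by real_asymp
  moreover have "((\<lambda>x. sqrt (2 / pi) * sqrt x * exp (- x / 2)) \<longlongrightarrow> 0) at_top"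
    by real_asymp
  ultimately have
    "((\<lambda>x. erf (sqrt x / sqrt 2) - sqrt (2 / pi) * sqrt x * exp (- x / 2)) \<longlongrightarrow> 1 - 0) at_top"
    by (intro tendsto_diff filterlim_compose[OF erf_at_top])
  moreover have "eventually (\<lambda>x. erf (sqrt x / sqrt 2) - sqrt (2 / pi) * sqrt x * exp (- x / 2)
      = chi2_cdf k x) at_top"
    using eventually_gt_at_top[of 0] by eventually_elim (simp add: \<open>k = 3\<close> chi2_cdf_3)
  ultimately show ?thesis
    by (simp add: Lim_transform_eventually)
qed

lemma chi2_cdf_ge_imp_pos: "0 < q \<Longrightarrow> q \<le> chi2_cdf k x \<Longrightarrow> 0 < x"
  by (rule ccontr) (simp add: chi2_cdf_def)

lemma chi2_inv_in_closure:
  assumes "k = 2 \<or> k = 3" "0 < q" "q < 1"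
  shows "chi2_inv k q \<in> closure {x. q \<le> chi2_cdf k x}"
proof -
  have "eventually (\<lambda>x. q < chi2_cdf k x) at_top"
    by (rule order_tendstoD(1)[OF chi2_cdf_at_top[OF assms(1)] assms(3)])
  then have "{x. q \<le> chi2_cdf k x} \<noteq> {}"
    by (auto simp: eventually_at_top_linorder dest: less_imp_le)
  moreover have "bdd_below {x. q \<le> chi2_cdf k x}"
    using chi2_cdf_ge_imp_pos[OF assms(2)] by (intro bdd_belowI[of _ 0]) (simp add: less_imp_le)
  ultimately show ?thesis
    unfolding chi2_inv_def by (rule closure_contains_Inf)
qed

lemma chi2_inv_nonneg:
  assumes "k = 2 \<or> k = 3" "0 < q" "q < 1"
  shows "0 \<le> chi2_inv k q"
proof -
  have "closure {x. q \<le> chi2_cdf k x} \<subseteq> {0..}"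
    using chi2_cdf_ge_imp_pos[OF assms(2)] by (intro closure_minimal) (auto simp: less_imp_le)
  then show ?thesis
    using chi2_inv_in_closure[OF assms] by auto
qed

lemma std_normal_cdf_sqrt_chi2_inv:
  assumes "k = 2 \<or> k = 3" "0 < q" "q < 1"
  shows "q \<le> std_normal_cdf (sqrt (chi2_inv k q))"
proof -
  have "closure {x. q \<le> chi2_cdf k x} \<subseteq> {x. q \<le> std_normal_cdf (sqrt x)}"
  proof (rule closure_minimal)
    show "{x. q \<le> chi2_cdf k x} \<subseteq> {x. q \<le> std_normal_cdf (sqrt x)}"
      using chi2_cdf_ge_imp_pos[OF assms(2)] chi2_cdf_le_std_normal_cdf_sqrt[OF assms(1)]
      by (auto intro: order_trans)
    show "closed {x. q \<le> std_normal_cdf (sqrt x)}"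
      unfolding std_normal_cdf_def by (intro closed_Collect_le continuous_intros) auto
  qed
  then show ?thesis
    using chi2_inv_in_closure[OF assms] by auto
qed

section \<open>Whitening\<close>

lemma invertible_if_pd_square:
  fixes S :: "real^'n^'n"
  assumes "pd_mat (S ** S)"
  shows "invertible S"
proof -
  have "x = 0" if "S *v x = 0" for x
  proof (rule ccontr)
    assume "x \<noteq> 0"
    then have "0 < x \<bullet> ((S ** S) *v x)"
      using assms by (simp add: pd_mat_def)
    then show False
      using that by (simp add: matrix_vector_mul_assoc[symmetric])
  qed
  then have "inj (\<lambda>x. S *v x)"
    by (intro injI) (metis matrix_vector_mult_diff_distrib right_minus_eq)
  then show ?thesis
    using matrix_left_invertible_injective invertible_left_inverse by blast
qed

lemma matrix_inv_left: "invertible A \<Longrightarrow> matrix_inv A ** A = mat 1"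
  unfolding invertible_def matrix_inv_def by (rule someI2_ex) auto

lemma inner_transpose_matrix_vector:
  fixes A :: "real^'n^'m"
  shows "(transpose A *v x) \<bullet> y = x \<bullet> (A *v y)"
  by (simp add: dot_lmul_matrix)

lemma matrix_vector_transpose_left_inverse:
  fixes S W :: "real^'n^'n"
  assumes "transpose S = S" "W ** S = mat 1"
  shows "S *v (transpose W *v a) = a"
proof -
  have "S ** transpose W = mat 1"
    using arg_cong[OF assms(2), of transpose] by (simp add: matrix_transpose_mul assms(1))
  then show ?thesis
    by (simp only: matrix_vector_mul_assoc matrix_vector_mul_lid)
qed

lemma quadratic_form_transpose_left_inverse:
  fixes S W :: "real^'n^'n"
  assumes "transpose S = S" "W ** S = mat 1"
  shows "(transpose W *v a) \<bullet> ((S ** S) *v (transpose W *v a)) = a \<bullet> a"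
proof -
  define u where "u = transpose W *v a"
  have "u \<bullet> ((S ** S) *v u) = u \<bullet> (S *v (S *v u))"
    by (simp only: matrix_vector_mul_assoc)
  also have "\<dots> = (transpose S *v u) \<bullet> (S *v u)"
    by (rule inner_transpose_matrix_vector[symmetric])
  also have "\<dots> = a \<bullet> a"
    by (simp only: u_def assms(1) matrix_vector_transpose_left_inverse[OF assms])
  finally show ?thesis
    by (simp only: u_def)
qed

lemma (in prob_space) prob_whitened_inner_le:
  fixes S W :: "real^'n^'n"
  assumes "gaussian_vec M d 0 (S ** S)" "transpose S = S" "W ** S = mat 1"
  shows "std_normal_cdf z \<le> prob {\<omega> \<in> space M. - ((transpose W *v a) \<bullet> d \<omega>) \<le> z * norm a}"
proof -
  let ?c = "- (transpose W *v a)"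
  have "?c \<bullet> ((S ** S) *v ?c) = a \<bullet> a"
    by (simp only: linear_neg[OF matrix_vector_mul_linear] inner_minus_left inner_minus_right
        minus_minus quadratic_form_transpose_left_inverse[OF assms(2,3)])
  then have "?c \<bullet> 0 + sqrt (?c \<bullet> ((S ** S) *v ?c)) * z \<le> z * norm a"
    by (simp add: norm_eq_sqrt_inner)
  from gaussian_vec_prob_inner_le[OF assms(1) this] show ?thesis
    by simp
qed

section \<open>Separating hyperplanes and distances to the obstacle\<close>

lemma Inf_inner_image_add_le:
  fixes a x :: "'a::real_inner"
  assumes "cball x r \<subseteq> K" "bdd_below ((\<lambda>y. a \<bullet> y) ` K)" "0 \<le> r"
  shows "Inf ((\<lambda>y. a \<bullet> y) ` K) + r * norm a \<le> a \<bullet> x"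
proof -
  define y where "y = x - (r / norm a) *\<^sub>R a"
  have "dist x y \<le> r"
    using assms(3) by (cases "a = 0") (simp_all add: y_def dist_norm)
  then have "Inf ((\<lambda>y. a \<bullet> y) ` K) \<le> a \<bullet> y"
    using assms(1,2) by (auto intro!: cInf_lower)
  also have "a \<bullet> y = a \<bullet> x - r * norm a"
    by (cases "a = 0")
       (simp_all add: y_def inner_diff_right power2_norm_eq_inner[symmetric] power2_eq_square)
  finally show ?thesis
    by simp
qed

lemma cball_sqrt_subset_if_sum_subset:
  fixes x :: "'a::real_inner"
  assumes "{y + v | y v. y \<in> A \<and> v \<bullet> v \<le> c} \<subseteq> K" "x \<in> A"
  shows "cball x (sqrt c) \<subseteq> K"
proof
  fix z assume "z \<in> cball x (sqrt c)"
  then have z: "norm (z - x) \<le> sqrt c"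
    by (simp add: dist_norm norm_minus_commute)
  then have "0 \<le> c"
    using norm_ge_zero[of "z - x"] by (metis order_trans real_sqrt_ge_0_iff)
  with z have "(norm (z - x))\<^sup>2 \<le> c"
    using power_mono[OF z norm_ge_zero, of 2] by simp
  then have "x + (z - x) \<in> {y + v | y v. y \<in> A \<and> v \<bullet> v \<le> c}"
    using assms(2)
    by (intro CollectI exI[of _ x] exI[of _ "z - x"]) (simp add: power2_norm_eq_inner)
  then show "z \<in> K"
    using assms(1) by auto
qed

lemma whitened_hyperplane_margin:
  fixes W :: "real^'n^'n"
  assumes "{y + v | y v. y \<in> (\<lambda>y. W *v y) ` C \<and> v \<bullet> v \<le> c} \<subseteq> K" "compact K" "0 \<le> c" "x \<in> C"
  shows "Inf ((\<lambda>y. a \<bullet> y) ` K) + sqrt c * norm a \<le> (transpose W *v a) \<bullet> x"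
proof -
  have "bdd_below ((\<lambda>y. a \<bullet> y) ` K)"
    using assms(2)
    by (intro bounded_imp_bdd_below compact_imp_bounded compact_continuous_image continuous_intros)
  with assms have "Inf ((\<lambda>y. a \<bullet> y) ` K) + sqrt c * norm a \<le> a \<bullet> (W *v x)"
    by (intro Inf_inner_image_add_le cball_sqrt_subset_if_sum_subset) auto
  then show ?thesis
    unfolding inner_transpose_matrix_vector .
qed

lemma infdist_ge_if_halfspace_separated:
  fixes a p :: "'a::real_inner"
  assumes "a \<noteq> 0" "S \<noteq> {}" "\<And>y. y \<in> S \<Longrightarrow> b \<le> a \<bullet> y" "a \<bullet> p \<le> b - r * norm a"
  shows "r \<le> infdist p S"
  unfolding infdist_notempty[OF assms(2)]
proof (rule cINF_greatest[OF assms(2)])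
  fix y assume "y \<in> S"
  then have "r * norm a \<le> a \<bullet> (y - p)"
    using assms(3)[of y] assms(4) by (simp add: inner_diff_right)
  also have "\<dots> \<le> norm a * norm (y - p)"
    by (rule norm_cauchy_schwarz)
  finally show "r \<le> dist p y"
    using assms(1) by (simp add: dist_norm norm_minus_commute mult.commute)
qed

lemma infdist_translation:
  fixes y d :: "'a::real_normed_vector"
  shows "infdist y ((\<lambda>x. x + d) ` A) = infdist (y - d) A"
proof (cases "A = {}")
  case False
  have "(INF x\<in>A. dist y (x + d)) = (INF x\<in>A. dist (y - d) x)"
    by (rule INF_cong) (simp_all add: dist_norm algebra_simps)
  with False show ?thesis
    by (simp add: infdist_notempty image_comp)
qed (simp add: infdist_def)

lemma (in prob_space) prob_infdist_translate_ge:
  fixes p d :: "'a \<Rightarrow> 'v::euclidean_space"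
  assumes indep: "indep_var borel p borel d" and "C \<noteq> {}" "a \<noteq> 0"
    and margin: "\<And>x. x \<in> C \<Longrightarrow> b + s \<le> a \<bullet> x"
  shows "prob {\<omega> \<in> space M. a \<bullet> p \<omega> \<le> b - r * norm a} * prob {\<omega> \<in> space M. - (a \<bullet> d \<omega>) \<le> s}
      \<le> prob {\<omega> \<in> space M. r \<le> infdist (p \<omega>) ((\<lambda>x. x + d \<omega>) ` C)}"
proof -
  have [measurable]: "p \<in> borel_measurable M" "d \<in> borel_measurable M"
    using indep by (simp_all add: indep_var_eq)
  define HA HB where "HA = {y. a \<bullet> y \<le> b - r * norm a}" and "HB = {y. - (a \<bullet> y) \<le> s}"
  define A B where "A = p -` HA \<inter> space M" and "B = d -` HB \<inter> space M"
  define T where "T = {\<omega> \<in> space M. r \<le> infdist (p \<omega>) ((\<lambda>x. x + d \<omega>) ` C)}"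
  have "HA \<in> sets borel" "HB \<in> sets borel"
    unfolding HA_def HB_def inner_minus_left[symmetric] by (intro borel_closed closed_halfspace_le)+
  moreover have "A \<inter> B = (\<lambda>\<omega>. (p \<omega>, d \<omega>)) -` (HA \<times> HB) \<inter> space M"
    by (auto simp: A_def B_def)
  ultimately have "prob A * prob B = prob (A \<inter> B)"
    unfolding A_def B_def using indep_varD[OF indep] by simp
  also have "\<dots> \<le> prob T"
  proof (rule finite_measure_mono)
    show "A \<inter> B \<subseteq> T"
    proof
      fix \<omega> assume \<omega>: "\<omega> \<in> A \<inter> B"
      have "b \<le> a \<bullet> y" if y: "y \<in> (\<lambda>x. x + d \<omega>) ` C" for y
      proof -
        obtain x where "x \<in> C" "y = x + d \<omega>"
          using y by blast
        moreover have "- (a \<bullet> d \<omega>) \<le> s"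
          using \<omega> by (simp add: B_def HB_def)
        ultimately show ?thesis
          using margin[of x] by (simp add: inner_add_right)
      qed
      moreover have "a \<bullet> p \<omega> \<le> b - r * norm a"
        using \<omega> by (simp add: A_def HA_def)
      ultimately have "r \<le> infdist (p \<omega>) ((\<lambda>x. x + d \<omega>) ` C)"
        using assms(2,3) by (intro infdist_ge_if_halfspace_separated) auto
      then show "\<omega> \<in> T"
        using \<omega> by (simp add: T_def A_def)
    qed
    have "(\<lambda>\<omega>. infdist (p \<omega> - d \<omega>) C) \<in> borel_measurable M"
      by (intro borel_measurable_continuous_on[OF continuous_on_infdist[OF continuous_on_id]])
        measurable
    then show "T \<in> events"
      unfolding T_def infdist_translation by measurable
  qed
  finally show ?thesis
    by (simp add: A_def B_def HA_def HB_def T_def vimage_def Int_def conj_commute)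
qed

lemma (in prob_space) prob_infdist_ge_whitened:
  fixes S W :: "real^'n^'n"
  assumes indep: "indep_var borel p borel d" and d: "gaussian_vec M d 0 (S ** S)"
    and S: "transpose S = S" "W ** S = mat 1" and "C \<noteq> {}" "a \<noteq> 0"
    and K: "{y + v | y v. y \<in> (\<lambda>y. W *v y) ` C \<and> v \<bullet> v \<le> c} \<subseteq> K" "compact K" "0 \<le> c"
  shows "prob {\<omega> \<in> space M.
        (transpose W *v a) \<bullet> p \<omega> \<le> Inf ((\<lambda>y. a \<bullet> y) ` K) - r * norm (transpose W *v a)}
      * std_normal_cdf (sqrt c) \<le> prob {\<omega> \<in> space M. r \<le> infdist (p \<omega>) ((\<lambda>x. x + d \<omega>) ` C)}"
proof -
  have "transpose W *v a \<noteq> 0"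
    using matrix_vector_transpose_left_inverse[OF S, of a] \<open>a \<noteq> 0\<close>
    by (metis matrix_vector_mult_0_right)
  moreover have "Inf ((\<lambda>y. a \<bullet> y) ` K) + sqrt c * norm a \<le> (transpose W *v a) \<bullet> x" if "x \<in> C" for x
    using whitened_hyperplane_margin[OF K that] .
  ultimately show ?thesis
    using prob_infdist_translate_ge[OF indep \<open>C \<noteq> {}\<close>] prob_whitened_inner_le[OF d S, of "sqrt c" a]
    by (meson mult_left_mono measure_nonneg order_trans)
qed

theorem theorem3:
  fixes M :: "'w measure"
    and p :: "'w \<Rightarrow> real^'d" and dob :: "'w \<Rightarrow> real^'d"
    and ph :: "real^'d" and Sigma_i Sigma_o S W :: "real^'d^'d"
    and Oh SW :: "(real^'d) set" and Psi :: "(real^'d) set"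
    and aW aWio a_io :: "real^'d" and bW bWio b_io rs \<delta> \<epsilon> :: real
    and L :: "'l set" and a :: "'l \<Rightarrow> real^'d" and b :: "'l \<Rightarrow> real" and ob :: 'l
  assumes dim: "CARD('d) = 2 \<or> CARD('d) = 3"
    and rs: "rs > 0" and delta: "0 < \<delta>" "\<delta> < 0.75"
    and M: "prob_space M"
    and p_gauss: "gaussian_vec M p ph Sigma_i"
    and d_gauss: "gaussian_vec M dob 0 Sigma_o"
    and Sigma_o_pd: "pd_mat Sigma_o"
    and indep: "prob_space.indep_var M borel p borel dob"
    and Oh_poly: "polytope Oh" and Oh_ne: "Oh \<noteq> {}"
    and S_sqrt: "psd_mat S" "S ** S = Sigma_o"
    and W_def: "W = matrix_inv S"
    and eps_def: "\<epsilon> = 1 - sqrt (1 - \<delta>)"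
    and Psi_fin: "finite Psi" and SW_def: "SW = convex hull Psi"
    and SW_mink: "{x + v | x v. x \<in> (\<lambda>y. W *v y) ` Oh \<and> v \<bullet> v \<le> chi2_inv CARD('d) (1 - \<epsilon>)} \<subseteq> SW"
    and ph_out: "W *v ph \<notin> SW"
    and qp_feas: "aW \<bullet> (W *v ph) - bW \<le> -1" "\<forall>\<psi>\<in>Psi. aW \<bullet> \<psi> - bW \<ge> 1"
    and qp_opt: "\<forall>a' b'. (a' \<bullet> (W *v ph) - b' \<le> -1 \<and> (\<forall>\<psi>\<in>Psi. a' \<bullet> \<psi> - b' \<ge> 1))
                    \<longrightarrow> (norm aW)\<^sup>2 \<le> (norm a')\<^sup>2"
    and hyp_shift: "aWio = aW" "bWio = Inf ((\<lambda>y. aW \<bullet> y) ` SW)"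
    and hyp_back: "a_io = transpose W *v aWio" "b_io = bWio"
    and ob_in: "ob \<in> L" "a ob = a_io" "b ob = b_io"
    and in_cell: "ph \<in> buavc rs \<delta> Sigma_i L a b"
  shows "measure M {w \<in> space M. infdist (p w) ((\<lambda>x. x + dob w) ` Oh) \<ge> rs} \<ge> 1 - \<delta>"
proof -
  interpret prob_space M
    by (rule M)
  define q where "q = sqrt (1 - \<delta>)"
  have q: "0 < q" "q < 1" "q * q = 1 - \<delta>" "1 - \<epsilon> = q"
    using delta by (simp_all add: q_def eps_def)
  define c where "c = chi2_inv CARD('d) q"
  have c: "0 \<le> c" "q \<le> std_normal_cdf (sqrt c)"
    unfolding c_def using chi2_inv_nonneg std_normal_cdf_sqrt_chi2_inv dim q(1,2) by blast+
  have mink: "{x + v | x v. x \<in> (\<lambda>y. W *v y) ` Oh \<and> v \<bullet> v \<le> c} \<subseteq> SW"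
    using SW_mink unfolding q(4) c_def .
  have S: "transpose S = S" "W ** S = mat 1"
    using S_sqrt Sigma_o_pd unfolding W_def psd_mat_def sym_mat_def
    by (auto intro: matrix_inv_left invertible_if_pd_square)
  obtain x where "x \<in> Oh"
    using Oh_ne by blast
  then have "W *v x \<in> convex hull Psi"
    using cball_sqrt_subset_if_sum_subset[OF mink, of "W *v x"] c(1) SW_def by auto
  then obtain \<psi> where "\<psi> \<in> Psi"
    by (metis convex_hull_empty empty_iff ex_in_conv)
  have "aW \<noteq> 0"
  proof
    assume "aW = 0"
    then show False
      using qp_feas \<open>\<psi> \<in> Psi\<close> by auto
  qed
  have "a_io \<bullet> ph
      \<le> b_io - rs * norm a_io - sqrt (2 * (a_io \<bullet> (Sigma_i *v a_io))) * erf_inv (2 * q - 1)"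
    using bspec[OF in_cell[unfolded buavc_def mem_Collect_eq] ob_in(1)] ob_in(2,3)
    by (simp add: q_def)
  then have "(1 + (2 * q - 1)) / 2 \<le> prob {\<omega> \<in> space M. a_io \<bullet> p \<omega> \<le> b_io - rs * norm a_io}"
    using q(1,2) by (intro gaussian_vec_prob_inner_le_erf_inv[OF p_gauss]) simp_all
  then have
    "q * q \<le> prob {\<omega> \<in> space M. a_io \<bullet> p \<omega> \<le> b_io - rs * norm a_io} * std_normal_cdf (sqrt c)"
    using q(1) c(2) by (intro mult_mono) auto
  also have "\<dots> \<le> measure M {w \<in> space M. infdist (p w) ((\<lambda>x. x + dob w) ` Oh) \<ge> rs}"
    unfolding hyp_back hyp_shift using d_gauss S_sqrt(2) Oh_ne \<open>aW \<noteq> 0\<close> mink c(1)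
    by (intro prob_infdist_ge_whitened[OF indep _ S])
       (simp_all add: SW_def Psi_fin finite_imp_compact_convex_hull)
  finally show ?thesis
    using q(3) by simp
qed

end
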